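(* Let $\mathcal X,\mathcal W$ be measurable spaces, $\mathcal Z=\mathcal X\times\mathcal W$, and let $(X,W,Y)\sim P_{X,W,Y}$ on $\mathcal X\times\mathcal W\times\mathbb R$ with $\mathbb E[Y^2]<\infty$; write $Z=(X,W)$. Let $n,m\ge1$, $N=n+m$, $\lambda\ge0$. Observe training data $\mathscr D$ consisting of $n$ i.i.d. labeled samples $(Z_i,Y_i)\sim P_{X,W,Y}$ and $m$ i.i.d. unlabeled samples $Z_j\sim P_{X,W}$, and let $(X,W)$ denote an independent test point. Let $\mathcal F\subset L^2(P_X)$, $\mathcal G\subset L^2(P_Z)$ be nonempty closed convex sets (functions on $\mathcal X$ identified with their lifts to $\mathcal Z$), define $$\mathcal{L}(f,g;\lambda)=\frac{n}{N}\mathbb{E}[(Y-f(X))^2]+\frac{m}{N}\mathbb{E}[(g(Z)-f(X))^2]+\lambda\frac{n}{N}\mathbb{E}[(Y-g(Z))^2],$$ and let $(f^\star,g^\star)\in\mathcal F\times\mathcal G$ be a minimizer of $\mathcal L(\cdot,\cdot;\lambda)$ over $\mathcal F\times\mathcal G$. Let $\mu(x)=\mathbb E[Y\mid X=x]$, $\eta(z)=\mathbb E[Y\mid Z=z]$, and assume $\mu\in\mathcal F$, $\mu\in\mathcal G$ and $\eta\in\mathcal G$. Then any estimator $(\hat f,\hat g)\in\mathcal F\times\mathcal G$ (constructed from $\mathscr D$) satisfies $$\mathbb{E}_{\mathscr{D},X}\left[(\hat f(X)-\mu(X))^2\right]\le\frac{\mathbb{E}_{\mathscr{D}}\left[\mathcal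 L(\hat f,\hat g;\lambda)-\mathcal L(f^\star,g^\star;\lambda)\right]}{\gamma_{n,m,\lambda}(\rho_\star)},$$ where $\gamma_{n,m,\lambda}(\rho_\star)=1-\frac{m^2}{N(m+n\lambda)}\rho_\star^2\ge\frac{n}{N}$.
   Context: Define the estimation errors $\hat e_f(X)=f^\star(X)-\hat f(X)$ and $\hat e_g(Z)=g^\star(Z)-\hat g(Z)$, and the correlation score $$\rho_\star=\frac{\big|\mathbb{E}_{\mathscr{D},Z}[\hat e_f(X)\hat e_g(Z)]\big|}{\big(\mathbb{E}_{\mathscr{D},X}[\hat e_f^2(X)]\big)^{1/2}\big(\mathbb{E}_{\mathscr{D},Z}[\hat e_g^2(Z)]\big)^{1/2}}\in[0,1],$$ with the convention $\rho_\star=0$ if either denominator factor is zero. Expectations $\mathbb E_{\mathscr D,\cdot}$ are over the training data and the independent test point; in $\mathbb E_{\mathscr D}[\mathcal L(\hat f,\hat g;\lambda)]$ the population loss is evaluated at the (data-dependent) functions and then averaged over $\mathscr D$. *)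

theory Defs
  imports "HOL-Probability.Probability"
begin

definition L2fun :: "'a measure \<Rightarrow> ('a \<Rightarrow> real) set" where
  "L2fun M = {f. f \<in> borel_measurable M \<and> integrable M (\<lambda>x. (f x)\<^sup>2)}"

text \<open>A set S of representatives is closed in L^2(M): it contains every L^2 limit
  of sequences in S (in particular it is closed under a.e. equality).\<close>
definition L2_closed :: "'a measure \<Rightarrow> ('a \<Rightarrow> real) set \<Rightarrow> bool" where
  "L2_closed M S \<longleftrightarrow>
     (\<forall>fs f. (\<forall>k. fs k \<in> S) \<and> f \<in> L2fun M \<and>
        (\<lambda>k. integral\<^sup>L M (\<lambda>x. (fs k x - f x)\<^sup>2)) \<longlonglongrightarrow> 0 \<longrightarrow> f \<in> S)"

definition fun_convex :: "('a \<Rightarrow> real) set \<Rightarrow> bool" where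
  "fun_convex S \<longleftrightarrow>
     (\<forall>f\<in>S. \<forall>g\<in>S. \<forall>t::real. 0 \<le> t \<and> t \<le> 1 \<longrightarrow> (\<lambda>x. t * f x + (1 - t) * g x) \<in> S)"

definition Loss :: "(('x \<times> 'w) \<times> real) measure \<Rightarrow> nat \<Rightarrow> nat \<Rightarrow> real
     \<Rightarrow> ('x \<Rightarrow> real) \<Rightarrow> ('x \<times> 'w \<Rightarrow> real) \<Rightarrow> real" where
  "Loss P n m lam f g =
     real n / real (n + m) * (\<integral>((x, w), y). (y - f x)\<^sup>2 \<partial>P)
   + real m / real (n + m) * (\<integral>((x, w), y). (g (x, w) - f x)\<^sup>2 \<partial>P)
   + lam * (real n / real (n + m)) * (\<integral>((x, w), y). (y - g (x, w))\<^sup>2 \<partial>P)"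

text \<open>Distribution of the training data: n labeled samples i.i.d. P and
  m unlabeled samples i.i.d. P_Z (the law of Z = (X,W)), all independent.\<close>
definition data_measure :: "(('x \<times> 'w) \<times> real) measure \<Rightarrow> ('x \<times> 'w) measure \<Rightarrow> nat \<Rightarrow> nat
     \<Rightarrow> ((nat \<Rightarrow> ('x \<times> 'w) \<times> real) \<times> (nat \<Rightarrow> 'x \<times> 'w)) measure" where
  "data_measure P MZ n m = (PiM {..<n} (\<lambda>_. P)) \<Otimes>\<^sub>M (PiM {..<m} (\<lambda>_. distr P MZ fst))"

text \<open>Correlation score rho_star; expectations over the data DM and the independent
  test point (PX = law of X, PZ = law of Z), with the convention rho = 0 if a
  denominator factor vanishes.\<close>
definition rho_star :: "'d measure \<Rightarrow> 'x measure \<Rightarrow> ('x \<times> 'w) measure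
     \<Rightarrow> ('x \<Rightarrow> real) \<Rightarrow> ('x \<times> 'w \<Rightarrow> real) \<Rightarrow> ('d \<Rightarrow> 'x \<Rightarrow> real) \<Rightarrow> ('d \<Rightarrow> 'x \<times> 'w \<Rightarrow> real) \<Rightarrow> real" where
  "rho_star DM PX PZ fs gs fh gh =
     (let num = \<bar>\<integral>(d, z). (fs (fst z) - fh d (fst z)) * (gs z - gh d z) \<partial>(DM \<Otimes>\<^sub>M PZ)\<bar>;
          a = (\<integral>(d, x). (fs x - fh d x)\<^sup>2 \<partial>(DM \<Otimes>\<^sub>M PX));
          b = (\<integral>(d, z). (gs z - gh d z)\<^sup>2 \<partial>(DM \<Otimes>\<^sub>M PZ))
      in if a = 0 \<or> b = 0 then 0 else num / (sqrt a * sqrt b))"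

end

theory Submission
  imports Defs
begin

(* Write g_opt = (m mu + n lam eta) / (m + n lam). Because Y - mu(X) is orthogonal to every
   square-integrable function of X, and Y - eta(Z) to every square-integrable function of Z, the
   excess loss over (mu, g_opt) is a quadratic form in the errors:
     L(f, g) - L(mu, g_opt)
       = |f - mu|^2 - 2 (m/N) <f - mu, g - g_opt> + ((m + n lam)/N) |g - g_opt|^2.
   Since m^2 < N (m + n lam), the form is positive definite, so the minimiser (f_star, g_star) agrees with
   (mu, g_opt) almost everywhere. Averaging the form over the data and bounding the cross term by
   AM-GM in terms of the correlation rho_star gives
     gamma(rho_star) E|fhat - mu|^2 <= E[L(fhat, ghat) - L(f_star, g_star)],
   and rho_star^2 <= 1 gives gamma(rho_star) >= n/N. *)

section \<open>Square-integrable functions\<close>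

lemma L2funI: "f \<in> borel_measurable M \<Longrightarrow> integrable M (\<lambda>x. (f x)\<^sup>2) \<Longrightarrow> f \<in> L2fun M"
  by (simp add: L2fun_def)

lemma L2fun_measurable: "f \<in> L2fun M \<Longrightarrow> f \<in> borel_measurable M"
  by (simp add: L2fun_def)

lemma L2fun_integrable_sq: "f \<in> L2fun M \<Longrightarrow> integrable M (\<lambda>x. (f x)\<^sup>2)"
  by (simp add: L2fun_def)

lemma integrable_mult_L2fun:
  assumes "f \<in> L2fun M" "g \<in> L2fun M"
  shows "integrable M (\<lambda>x. f x * g x)"
proof (rule Bochner_Integration.integrable_bound)
  show "integrable M (\<lambda>x. (f x)\<^sup>2 + (g x)\<^sup>2)"
    using assms by (simp add: L2fun_integrable_sq)
  show "(\<lambda>x. f x * g x) \<in> borel_measurable M"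
    using assms by (intro borel_measurable_times) (simp_all add: L2fun_measurable)
  have "\<bar>f x * g x\<bar> \<le> (f x)\<^sup>2 + (g x)\<^sup>2" for x
  proof -
    have "2 * \<bar>f x\<bar> * \<bar>g x\<bar> \<le> (f x)\<^sup>2 + (g x)\<^sup>2"
      using sum_squares_bound[of "\<bar>f x\<bar>" "\<bar>g x\<bar>"] by simp
    moreover have "0 \<le> \<bar>f x\<bar> * \<bar>g x\<bar>"
      by simp
    ultimately show ?thesis
      unfolding abs_mult by linarith
  qed
  then show "AE x in M. norm (f x * g x) \<le> norm ((f x)\<^sup>2 + (g x)\<^sup>2)"
    by simp
qed

lemma L2fun_add:
  assumes "f \<in> L2fun M" "g \<in> L2fun M"
  shows "(\<lambda>x. f x + g x) \<in> L2fun M"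
proof (rule L2funI)
  show "(\<lambda>x. f x + g x) \<in> borel_measurable M"
    using assms by (intro borel_measurable_add) (simp_all add: L2fun_measurable)
  have "integrable M (\<lambda>x. (f x)\<^sup>2 + (g x)\<^sup>2 + 2 * (f x * g x))"
    using assms integrable_mult_L2fun[OF assms] by (simp add: L2fun_integrable_sq)
  then show "integrable M (\<lambda>x. (f x + g x)\<^sup>2)"
    by (simp add: power2_sum mult.assoc)
qed

lemma L2fun_cmult: "f \<in> L2fun M \<Longrightarrow> (\<lambda>x. c * f x) \<in> L2fun M"
  by (auto simp: L2fun_def power_mult_distrib intro!: borel_measurable_times)

lemma L2fun_diff:
  assumes "f \<in> L2fun M" "g \<in> L2fun M"
  shows "(\<lambda>x. f x - g x) \<in> L2fun M"
  using L2fun_add[OF assms(1) L2fun_cmult[OF assms(2), of "-1"]] by simp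

lemma L2fun_comp:
  assumes "T \<in> measurable M N" "f \<in> L2fun (distr M N T)"
  shows "(\<lambda>x. f (T x)) \<in> L2fun M"
proof -
  have [measurable]: "f \<in> borel_measurable N"
    using assms(2) by (simp add: L2fun_def)
  show ?thesis
    using assms by (simp add: L2fun_def integrable_distr_eq)
qed

lemma distr_pair_snd:
  assumes "prob_space D" "sigma_finite_measure Q"
  shows "distr (D \<Otimes>\<^sub>M Q) Q snd = Q"
proof (rule measure_eqI)
  fix A assume "A \<in> sets (distr (D \<Otimes>\<^sub>M Q) Q snd)"
  then have "A \<in> sets Q" by simp
  then have "emeasure (distr (D \<Otimes>\<^sub>M Q) Q snd) A = emeasure (D \<Otimes>\<^sub>M Q) (space D \<times> A)"
    by (auto simp: emeasure_distr space_pair_measure dest: sets.sets_into_space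
        intro!: arg_cong2[where f=emeasure])
  also have "\<dots> = emeasure Q A"
    using \<open>A \<in> sets Q\<close> assms
    by (simp add: sigma_finite_measure.emeasure_pair_measure_Times prob_space.emeasure_space_1)
  finally show "emeasure (distr (D \<Otimes>\<^sub>M Q) Q snd) A = emeasure Q A" .
qed simp

lemma L2fun_snd:
  assumes "prob_space D" "sigma_finite_measure Q" "f \<in> L2fun Q"
  shows "(\<lambda>p. f (snd p)) \<in> L2fun (D \<Otimes>\<^sub>M Q)"
proof -
  have "Q = distr (D \<Otimes>\<^sub>M Q) Q snd"
    using assms by (simp add: distr_pair_snd)
  then show ?thesis
    using L2fun_comp[of snd "D \<Otimes>\<^sub>M Q" Q f] assms(3) by simp
qed

lemma AE_pair_snd:
  assumes "prob_space D" "sigma_finite_measure Q" "AE y in Q. P y"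
  shows "AE p in D \<Otimes>\<^sub>M Q. P (snd p)"
proof -
  have "AE y in distr (D \<Otimes>\<^sub>M Q) Q snd. P y"
    unfolding distr_pair_snd[OF assms(1,2)] by (rule assms(3))
  then show ?thesis
    by (rule AE_distrD[OF measurable_snd])
qed

lemma Cauchy_Schwarz_integral:
  assumes "f \<in> L2fun M" "g \<in> L2fun M"
  shows "(\<integral>x. f x * g x \<partial>M)\<^sup>2 \<le> (\<integral>x. (f x)\<^sup>2 \<partial>M) * (\<integral>x. (g x)\<^sup>2 \<partial>M)"
proof -
  define A B C where "A = (\<integral>x. (f x)\<^sup>2 \<partial>M)" and "B = (\<integral>x. (g x)\<^sup>2 \<partial>M)"
    and "C = (\<integral>x. f x * g x \<partial>M)"
  have discriminant: "0 \<le> A - 2 * t * C + t\<^sup>2 * B" for t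
  proof -
    have "A - 2 * t * C + t\<^sup>2 * B = (\<integral>x. (f x)\<^sup>2 - 2 * t * (f x * g x) + t\<^sup>2 * (g x)\<^sup>2 \<partial>M)"
      using assms integrable_mult_L2fun[OF assms]
      by (simp add: A_def B_def C_def L2fun_integrable_sq)
    also have "\<dots> = (\<integral>x. (f x - t * g x)\<^sup>2 \<partial>M)"
      by (simp add: power2_diff power_mult_distrib algebra_simps)
    also have "\<dots> \<ge> 0"
      by simp
    finally show ?thesis .
  qed
  have "C\<^sup>2 \<le> A * B"
  proof (cases "B = 0")
    case True
    have "C = 0"
    proof (rule ccontr)
      assume "C \<noteq> 0"
      then have "2 * ((A + 1) / (2 * C)) * C = A + 1"
        by simp
      with discriminant[of "(A + 1) / (2 * C)"] True show False
        by simp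
    qed
    with True show ?thesis
      by simp
  next
    case False
    then have "B > 0"
      by (simp add: B_def order_le_neq_trans)
    then have "A - 2 * (C / B) * C + (C / B)\<^sup>2 * B = A - C\<^sup>2 / B"
      by (simp add: power2_eq_square field_simps)
    with discriminant[of "C / B"] have "C\<^sup>2 / B \<le> A"
      by linarith
    with \<open>B > 0\<close> show ?thesis
      by (simp add: pos_divide_le_eq)
  qed
  then show ?thesis
    by (simp add: A_def B_def C_def)
qed

lemma AE_eq_if_integral_sq_diff_eq_0:
  assumes "integrable M (\<lambda>x. (f x - g x :: real)\<^sup>2)" "(\<integral>x. (f x - g x)\<^sup>2 \<partial>M) = 0"
  shows "AE x in M. f x = g x"
proof -
  have "AE x in M. (f x - g x)\<^sup>2 = 0"
    using integral_nonneg_eq_0_iff_AE[OF assms(1)] assms(2) by simp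
  then show ?thesis
    by eventually_elim simp
qed

lemma cond_exp_residual_orthogonal:
  assumes M: "finite_measure M" and T: "T \<in> measurable M N" and h: "h \<in> borel_measurable N"
    and Y: "Y \<in> L2fun M" and c: "(\<lambda>x. c (T x)) \<in> L2fun M" and hT: "(\<lambda>x. h (T x)) \<in> L2fun M"
    and cond_exp: "AE x in M. c (T x) = real_cond_exp M (vimage_algebra (space M) T N) Y x"
  shows "(\<integral>x. (Y x - c (T x)) * h (T x) \<partial>M) = 0"
proof -
  define F where "F = vimage_algebra (space M) T N"
  have "subalgebra M F"
    using sets_image_in_sets[OF refl T] by (simp add: subalgebra_def F_def)
  then interpret F: finite_measure_subalgebra M F
    by (intro finite_measure_subalgebra.intro finite_measure_subalgebra_axioms.intro M)
  have hT_F: "(\<lambda>x. h (T x)) \<in> borel_measurable F"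
    unfolding F_def using T h
    by (intro measurable_compose[OF measurable_vimage_algebra1 h]) (auto simp: measurable_def)
  have "AE x in M. h (T x) * c (T x) = h (T x) * real_cond_exp M F Y x"
    using cond_exp unfolding F_def by eventually_elim simp
  then have "(\<integral>x. h (T x) * c (T x) \<partial>M) = (\<integral>x. h (T x) * real_cond_exp M F Y x \<partial>M)"
    using hT c
    by (intro integral_cong_AE borel_measurable_times borel_measurable_cond_exp2)
      (simp_all add: L2fun_measurable)
  also have "\<dots> = (\<integral>x. h (T x) * Y x \<partial>M)"
    using integrable_mult_L2fun[OF hT Y] hT_F Y by (intro F.real_cond_exp_intg(2)) (auto simp: L2fun_measurable)
  finally have "(\<integral>x. h (T x) * c (T x) \<partial>M) = (\<integral>x. h (T x) * Y x \<partial>M)" .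
  moreover have "(\<integral>x. (Y x - c (T x)) * h (T x) \<partial>M)
      = (\<integral>x. h (T x) * Y x \<partial>M) - (\<integral>x. h (T x) * c (T x) \<partial>M)"
    using integrable_mult_L2fun[OF hT Y] integrable_mult_L2fun[OF hT c]
    by (subst Bochner_Integration.integral_diff[symmetric]) (simp_all add: algebra_simps)
  ultimately show ?thesis
    by simp
qed

section \<open>A quadratic form bounded through a correlation coefficient\<close>

definition correlation :: "real \<Rightarrow> real \<Rightarrow> real \<Rightarrow> real" where
  "correlation A B C = (if A = 0 \<or> B = 0 then 0 else \<bar>C\<bar> / (sqrt A * sqrt B))"

lemma correlation_sq:
  assumes "0 < A" "0 < B"
  shows "(correlation A B C)\<^sup>2 = C\<^sup>2 / (A * B)"
  using assms by (simp add: correlation_def power_divide power_mult_distrib)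

lemma correlation_sq_le_1:
  assumes "0 \<le> A" "0 \<le> B" "C\<^sup>2 \<le> A * B"
  shows "(correlation A B C)\<^sup>2 \<le> 1"
proof (cases "A = 0 \<or> B = 0")
  case False
  with assms have "0 < A * B"
    by simp
  with assms False show ?thesis
    by (simp add: correlation_sq)
qed (simp add: correlation_def)

lemma quadratic_form_ge:
  fixes A B C a b :: real
  assumes "0 \<le> A" "0 \<le> B" "C\<^sup>2 \<le> A * B" "0 < b"
  shows "A * (1 - a\<^sup>2 / b * (correlation A B C)\<^sup>2) \<le> A - 2 * a * C + b * B"
proof (cases "A = 0 \<or> B = 0")
  case True
  with assms(3) have "C = 0"
    by auto
  with True assms show ?thesis
    by (auto simp: correlation_def)
next
  case False
  with assms have "0 < A" "0 < B"
    by auto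
  then have "A * (1 - a\<^sup>2 / b * (correlation A B C)\<^sup>2) = A - (a * C)\<^sup>2 / (b * B)"
    unfolding correlation_sq[OF \<open>0 < A\<close> \<open>0 < B\<close>] by (simp add: field_simps power2_eq_square)
  also have "\<dots> \<le> A - 2 * a * C + b * B"
  proof -
    have "2 * (a * C) * (b * B) \<le> (a * C)\<^sup>2 + (b * B)\<^sup>2"
      by (rule sum_squares_bound)
    with \<open>0 < B\<close> \<open>0 < b\<close> have "2 * a * C \<le> (a * C)\<^sup>2 / (b * B) + b * B"
      by (simp add: field_simps power2_eq_square)
    then show ?thesis
      by linarith
  qed
  finally show ?thesis .
qed

definition gamma_factor :: "nat \<Rightarrow> nat \<Rightarrow> real \<Rightarrow> real \<Rightarrow> real" where
  "gamma_factor n m lam rho = 1 - (real m)\<^sup>2 / (real (n + m) * (real m + real n * lam)) * rho\<^sup>2"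

definition excess_form :: "nat \<Rightarrow> nat \<Rightarrow> real \<Rightarrow> real \<Rightarrow> real \<Rightarrow> real \<Rightarrow> real" where
  "excess_form n m lam A B C =
     A - 2 * (real m / real (n + m)) * C + ((real m + real n * lam) / real (n + m)) * B"

lemma gamma_factor_ge:
  assumes "0 \<le> lam" "rho\<^sup>2 \<le> 1"
  shows "real n / real (n + m) \<le> gamma_factor n m lam rho"
proof (cases "m = 0")
  case True
  then show ?thesis
    by (simp add: gamma_factor_def divide_le_eq_1)
next
  case False
  define N s where "N = real (n + m)" and "s = real m + real n * lam"
  have "0 < N" "real m \<le> s"
    using False assms(1) by (simp_all add: N_def s_def)
  have "(real m)\<^sup>2 / (N * s) * rho\<^sup>2 \<le> (real m)\<^sup>2 / (N * s)"
    using assms(2) \<open>0 < N\<close> \<open>real m \<le> s\<close> False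
    by (intro mult_left_le) (auto intro!: divide_nonneg_pos)
  also have "\<dots> \<le> (real m)\<^sup>2 / (N * real m)"
    using \<open>0 < N\<close> \<open>real m \<le> s\<close> False
    by (intro divide_left_mono mult_left_mono) auto
  also have "\<dots> = real m / N"
    using False by (simp add: power2_eq_square)
  also have "\<dots> = 1 - real n / N"
    using \<open>0 < N\<close> by (simp add: N_def field_simps)
  finally show ?thesis
    by (simp add: gamma_factor_def N_def s_def)
qed

lemma gamma_factor_pos:
  assumes "0 < n" "0 \<le> lam" "rho\<^sup>2 \<le> 1"
  shows "0 < gamma_factor n m lam rho"
proof -
  have "0 < real n / real (n + m)"
    using assms(1) by simp
  also have "\<dots> \<le> gamma_factor n m lam rho"
    using assms(2,3) by (rule gamma_factor_ge)
  finally show ?thesis .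
qed

lemma excess_form_bound:
  assumes "0 < n" "0 < m" "0 \<le> lam" "0 \<le> A" "0 \<le> B" "C\<^sup>2 \<le> A * B"
  shows "real n / real (n + m) \<le> gamma_factor n m lam (correlation A B C)"
    and "A \<le> excess_form n m lam A B C / gamma_factor n m lam (correlation A B C)"
proof -
  show gamma_ge: "real n / real (n + m) \<le> gamma_factor n m lam (correlation A B C)"
    using assms by (intro gamma_factor_ge correlation_sq_le_1)
  define N s where "N = real (n + m)" and "s = real m + real n * lam"
  have "0 < N" "0 < s"
    using assms by (simp_all add: N_def s_def add_pos_nonneg)
  have "(real m / N)\<^sup>2 / (s / N) = (real m)\<^sup>2 / (N * s)"
    using \<open>0 < N\<close> by (simp add: power2_eq_square field_simps)
  then have "A * gamma_factor n m lam (correlation A B C) \<le> excess_form n m lam A B C"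
    using quadratic_form_ge[OF assms(4-6), of "s / N" "real m / N"] \<open>0 < N\<close> \<open>0 < s\<close>
    by (simp add: gamma_factor_def excess_form_def N_def s_def)
  moreover have "0 < gamma_factor n m lam (correlation A B C)"
    using assms by (intro gamma_factor_pos correlation_sq_le_1)
  ultimately show "A \<le> excess_form n m lam A B C / gamma_factor n m lam (correlation A B C)"
    by (simp add: pos_le_divide_eq)
qed

lemma excess_form_le_0_iff:
  assumes "0 < n" "0 < m" "0 \<le> lam" "0 \<le> A" "0 \<le> B" "C\<^sup>2 \<le> A * B"
  shows "excess_form n m lam A B C \<le> 0 \<longleftrightarrow> A = 0 \<and> B = 0"
proof
  assume le: "excess_form n m lam A B C \<le> 0"
  have "0 < gamma_factor n m lam (correlation A B C)"
    using assms by (intro gamma_factor_pos correlation_sq_le_1)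
  with le have "A \<le> 0"
    using excess_form_bound(2)[OF assms] by (meson divide_nonpos_pos order_trans)
  with assms have "A = 0" "C = 0"
    by auto
  define k where "k = (real m + real n * lam) / real (n + m)"
  have "0 < k"
    using assms by (simp add: k_def add_pos_nonneg)
  moreover have "k * B \<le> 0"
    using le \<open>A = 0\<close> \<open>C = 0\<close> by (simp add: excess_form_def k_def)
  ultimately show "A = 0 \<and> B = 0"
    using \<open>A = 0\<close> assms(5) by (simp add: mult_le_0_iff)
next
  assume "A = 0 \<and> B = 0"
  with assms(6) show "excess_form n m lam A B C \<le> 0"
    by (simp add: excess_form_def)
qed

section \<open>The population loss\<close>

lemma weighted_loss_excess:
  fixes a b c t :: real
  assumes L2: "Y \<in> L2fun M" "u \<in> L2fun M" "v \<in> L2fun M" "\<mu> \<in> L2fun M" "\<eta> \<in> L2fun M"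
    and t: "t * (b + c) = b" and g: "\<And>x. g x = t * \<mu> x + (1 - t) * \<eta> x"
    and orth: "(\<integral>x. (Y x - \<mu> x) * (u x - \<mu> x) \<partial>M) = 0"
      "(\<integral>x. (Y x - \<eta> x) * (u x - \<mu> x) \<partial>M) = 0"
      "(\<integral>x. (Y x - \<eta> x) * (v x - g x) \<partial>M) = 0"
  shows "a * (\<integral>x. (Y x - u x)\<^sup>2 \<partial>M) + b * (\<integral>x. (v x - u x)\<^sup>2 \<partial>M) + c * (\<integral>x. (Y x - v x)\<^sup>2 \<partial>M)
      - (a * (\<integral>x. (Y x - \<mu> x)\<^sup>2 \<partial>M) + b * (\<integral>x. (g x - \<mu> x)\<^sup>2 \<partial>M) + c * (\<integral>x. (Y x - g x)\<^sup>2 \<partial>M))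
    = (a + b) * (\<integral>x. (u x - \<mu> x)\<^sup>2 \<partial>M) - 2 * b * (\<integral>x. (u x - \<mu> x) * (v x - g x) \<partial>M)
      + (b + c) * (\<integral>x. (v x - g x)\<^sup>2 \<partial>M)"
proof -
  have "g = (\<lambda>x. t * \<mu> x + (1 - t) * \<eta> x)"
    using g by auto
  then have "g \<in> L2fun M"
    using L2 by (simp add: L2fun_add L2fun_cmult)
  note sq = L2fun_integrable_sq[OF L2fun_diff]
  note prod = integrable_mult_L2fun[OF L2fun_diff L2fun_diff]
  \<comment> \<open>Pointwise, excess loss minus quadratic form is a combination of the three orthogonality
     integrands plus a term that vanishes because \<open>t * (b + c) = b\<close>.\<close>
  have pointwise:
    "a * (Y x - u x)\<^sup>2 + b * (v x - u x)\<^sup>2 + c * (Y x - v x)\<^sup>2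
      - (a * (Y x - \<mu> x)\<^sup>2 + b * (g x - \<mu> x)\<^sup>2 + c * (Y x - g x)\<^sup>2)
    = (a + b) * (u x - \<mu> x)\<^sup>2 - 2 * b * ((u x - \<mu> x) * (v x - g x)) + (b + c) * (v x - g x)\<^sup>2
      + 2 * (b * (1 - t) * ((Y x - \<eta> x) * (u x - \<mu> x))
             - (a + b * (1 - t)) * ((Y x - \<mu> x) * (u x - \<mu> x))
             - c * ((Y x - \<eta> x) * (v x - g x)))
      + 2 * (v x - g x) * (\<eta> x - \<mu> x) * (b - t * (b + c))" for x
    unfolding g by algebra
  have "(\<integral>x. a * (Y x - u x)\<^sup>2 + b * (v x - u x)\<^sup>2 + c * (Y x - v x)\<^sup>2
      - (a * (Y x - \<mu> x)\<^sup>2 + b * (g x - \<mu> x)\<^sup>2 + c * (Y x - g x)\<^sup>2) \<partial>M)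
    = (\<integral>x. (a + b) * (u x - \<mu> x)\<^sup>2 - 2 * b * ((u x - \<mu> x) * (v x - g x)) + (b + c) * (v x - g x)\<^sup>2
      + 2 * (b * (1 - t) * ((Y x - \<eta> x) * (u x - \<mu> x))
             - (a + b * (1 - t)) * ((Y x - \<mu> x) * (u x - \<mu> x))
             - c * ((Y x - \<eta> x) * (v x - g x))) \<partial>M)"
    using t by (simp only: pointwise) simp
  then show ?thesis
    using L2 \<open>g \<in> L2fun M\<close> orth
    by (simp add: sq prod)
qed

locale semisupervised_regression =
  fixes MX :: "'x measure" and MW :: "'w measure" and P :: "(('x \<times> 'w) \<times> real) measure"
    and n m :: nat and lam :: real and mu :: "'x \<Rightarrow> real" and eta :: "'x \<times> 'w \<Rightarrow> real"
  assumes prob_space_P: "prob_space P"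
    and sets_P: "sets P = sets ((MX \<Otimes>\<^sub>M MW) \<Otimes>\<^sub>M borel)"
    and Y_sq_integrable: "integrable P (\<lambda>p. (snd p)\<^sup>2)"
    and n_pos: "0 < n" and m_pos: "0 < m" and lam_nonneg: "0 \<le> lam"
    and mu_L2: "mu \<in> L2fun (distr P MX (\<lambda>p. fst (fst p)))"
    and mu_cond_exp: "AE p in P. mu (fst (fst p)) =
      real_cond_exp P (vimage_algebra (space P) (\<lambda>p. fst (fst p)) MX) snd p"
    and eta_L2: "eta \<in> L2fun (distr P (MX \<Otimes>\<^sub>M MW) fst)"
    and eta_cond_exp: "AE p in P. eta (fst p) =
      real_cond_exp P (vimage_algebra (space P) fst (MX \<Otimes>\<^sub>M MW)) snd p"
begin

abbreviation PX :: "'x measure" where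
  "PX \<equiv> distr P MX (\<lambda>p. fst (fst p))"

abbreviation PZ :: "('x \<times> 'w) measure" where
  "PZ \<equiv> distr P (MX \<Otimes>\<^sub>M MW) fst"

declare sets_P[measurable_cong]

interpretation P: prob_space P
  by (rule prob_space_P)

lemma measurable_X[measurable]: "(\<lambda>p. fst (fst p)) \<in> measurable P MX"
  by measurable

lemma measurable_Z[measurable]: "fst \<in> measurable P (MX \<Otimes>\<^sub>M MW)"
  by measurable

lemma prob_space_PX: "prob_space PX"
  by (rule prob_space.prob_space_distr[OF prob_space_P measurable_X])

lemma prob_space_PZ: "prob_space PZ"
  by (rule prob_space.prob_space_distr[OF prob_space_P measurable_Z])

lemma PX_eq_distr_PZ: "PX = distr PZ MX fst"
  by (subst distr_distr) (auto simp: comp_def)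

lemma measurable_fst_PZ: "fst \<in> measurable PZ MX"
  by (simp cong: measurable_cong_sets)

lemma integral_PX_eq_PZ:
  fixes h :: "'x \<Rightarrow> real"
  assumes "h \<in> borel_measurable MX"
  shows "(\<integral>x. h x \<partial>PX) = (\<integral>z. h (fst z) \<partial>PZ)"
  unfolding PX_eq_distr_PZ using measurable_fst_PZ assms by (rule integral_distr)

lemma L2fun_PX_measurable: "f \<in> L2fun PX \<Longrightarrow> f \<in> borel_measurable MX"
  by (simp add: L2fun_def)

lemma L2fun_PZ_measurable: "g \<in> L2fun PZ \<Longrightarrow> g \<in> borel_measurable (MX \<Otimes>\<^sub>M MW)"
  by (simp add: L2fun_def)

lemma L2fun_PX_comp: "f \<in> L2fun PX \<Longrightarrow> (\<lambda>p. f (fst (fst p))) \<in> L2fun P"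
  by (rule L2fun_comp[OF measurable_X])

lemma L2fun_PZ_comp: "g \<in> L2fun PZ \<Longrightarrow> (\<lambda>p. g (fst p)) \<in> L2fun P"
  by (rule L2fun_comp[OF measurable_Z])

lemma L2fun_PX_lift: "f \<in> L2fun PX \<Longrightarrow> (\<lambda>z. f (fst z)) \<in> L2fun PZ"
  unfolding PX_eq_distr_PZ by (rule L2fun_comp[OF measurable_fst_PZ])

lemma Y_L2: "snd \<in> L2fun P"
  using Y_sq_integrable by (simp add: L2fun_def)

lemma mu_orthogonal:
  assumes "f \<in> L2fun PX"
  shows "(\<integral>p. (snd p - mu (fst (fst p))) * f (fst (fst p)) \<partial>P) = 0"
  using assms mu_L2
  by (intro cond_exp_residual_orthogonal[OF _ measurable_X _ Y_L2 _ _ mu_cond_exp])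
    (simp_all add: P.finite_measure_axioms L2fun_PX_measurable L2fun_PX_comp)

lemma eta_orthogonal:
  assumes "g \<in> L2fun PZ"
  shows "(\<integral>p. (snd p - eta (fst p)) * g (fst p) \<partial>P) = 0"
  using assms eta_L2
  by (intro cond_exp_residual_orthogonal[OF _ measurable_Z _ Y_L2 _ _ eta_cond_exp])
    (simp_all add: P.finite_measure_axioms L2fun_PZ_measurable L2fun_PZ_comp)

definition g_opt :: "'x \<times> 'w \<Rightarrow> real" where
  "g_opt z = real m / (real m + real n * lam) * mu (fst z)
     + (1 - real m / (real m + real n * lam)) * eta z"

lemma g_opt_L2: "g_opt \<in> L2fun PZ"
proof -
  have "(\<lambda>z. real m / (real m + real n * lam) * mu (fst z)
     + (1 - real m / (real m + real n * lam)) * eta z) \<in> L2fun PZ"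
    using L2fun_PX_lift[OF mu_L2] eta_L2 by (intro L2fun_add L2fun_cmult)
  then show ?thesis
    by (simp add: g_opt_def[abs_def])
qed

lemma mu_measurable[measurable]: "mu \<in> borel_measurable MX"
  using mu_L2 by (rule L2fun_PX_measurable)

lemma g_opt_measurable[measurable]: "g_opt \<in> borel_measurable (MX \<Otimes>\<^sub>M MW)"
  using g_opt_L2 by (rule L2fun_PZ_measurable)

lemma g_opt_mem_convex:
  assumes "fun_convex G" "(\<lambda>z. mu (fst z)) \<in> G" "eta \<in> G"
  shows "g_opt \<in> G"
proof -
  have "0 < real m + real n * lam"
    using m_pos lam_nonneg by (simp add: add_pos_nonneg)
  then have "0 \<le> real m / (real m + real n * lam)" "real m / (real m + real n * lam) \<le> 1"
    using lam_nonneg by simp_all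
  then show ?thesis
    unfolding g_opt_def[abs_def]
    by (intro assms(1)[unfolded fun_convex_def, rule_format, OF assms(2,3)] conjI)
qed

lemma prob_space_data_measure: "prob_space (data_measure P (MX \<Otimes>\<^sub>M MW) n m)"
  unfolding data_measure_def by (intro prob_space_pair prob_space_PiM prob_space_P prob_space_PZ)

lemma Loss_eq_integral_P:
  "Loss P n m lam f g =
     real n / real (n + m) * (\<integral>p. (snd p - f (fst (fst p)))\<^sup>2 \<partial>P)
   + real m / real (n + m) * (\<integral>p. (g (fst p) - f (fst (fst p)))\<^sup>2 \<partial>P)
   + lam * (real n / real (n + m)) * (\<integral>p. (snd p - g (fst p))\<^sup>2 \<partial>P)"
  by (simp add: Loss_def case_prod_unfold)

lemma Loss_sub_Loss_g_opt:
  assumes f: "f \<in> L2fun PX" and g: "g \<in> L2fun PZ"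
  shows "Loss P n m lam f g - Loss P n m lam mu g_opt =
    excess_form n m lam (\<integral>x. (f x - mu x)\<^sup>2 \<partial>PX) (\<integral>z. (g z - g_opt z)\<^sup>2 \<partial>PZ)
      (\<integral>z. (f (fst z) - mu (fst z)) * (g z - g_opt z) \<partial>PZ)"
proof -
  define s where "s = real m + real n * lam"
  have "0 < real (n + m)" "0 < s"
    using n_pos m_pos lam_nonneg by (simp_all add: s_def add_pos_nonneg)
  have weights: "real n / real (n + m) + real m / real (n + m) = 1"
    "real m / real (n + m) + lam * (real n / real (n + m)) = s / real (n + m)"
    using \<open>0 < real (n + m)\<close> by (simp_all add: s_def add_divide_distrib[symmetric])
  then have t: "real m / s * (real m / real (n + m) + lam * (real n / real (n + m))) = real m / real (n + m)"
    using \<open>0 < s\<close> by simp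
  have g_opt_fst: "g_opt (fst p) = real m / s * mu (fst (fst p)) + (1 - real m / s) * eta (fst p)" for p
    by (simp add: g_opt_def s_def)
  have "Loss P n m lam f g - Loss P n m lam mu g_opt =
      (\<integral>p. (f (fst (fst p)) - mu (fst (fst p)))\<^sup>2 \<partial>P)
      - 2 * (real m / real (n + m)) * (\<integral>p. (f (fst (fst p)) - mu (fst (fst p))) * (g (fst p) - g_opt (fst p)) \<partial>P)
      + s / real (n + m) * (\<integral>p. (g (fst p) - g_opt (fst p))\<^sup>2 \<partial>P)"
    using weighted_loss_excess[OF Y_L2 L2fun_PX_comp[OF f] L2fun_PZ_comp[OF g]
        L2fun_PX_comp[OF mu_L2] L2fun_PZ_comp[OF eta_L2] t g_opt_fst
        mu_orthogonal[OF L2fun_diff[OF f mu_L2]]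
        eta_orthogonal[OF L2fun_PX_lift[OF L2fun_diff[OF f mu_L2]]]
        eta_orthogonal[OF L2fun_diff[OF g g_opt_L2]], of "real n / real (n + m)"]
    unfolding Loss_eq_integral_P weights by simp
  also have "\<dots> = excess_form n m lam (\<integral>x. (f x - mu x)\<^sup>2 \<partial>PX) (\<integral>z. (g z - g_opt z)\<^sup>2 \<partial>PZ)
      (\<integral>z. (f (fst z) - mu (fst z)) * (g z - g_opt z) \<partial>PZ)"
  proof -
    have [measurable]: "f \<in> borel_measurable MX" "g \<in> borel_measurable (MX \<Otimes>\<^sub>M MW)"
      using f g by (simp_all add: L2fun_PX_measurable L2fun_PZ_measurable)
    have "(\<integral>x. (f x - mu x)\<^sup>2 \<partial>PX) = (\<integral>p. (f (fst (fst p)) - mu (fst (fst p)))\<^sup>2 \<partial>P)"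
      "(\<integral>z. (g z - g_opt z)\<^sup>2 \<partial>PZ) = (\<integral>p. (g (fst p) - g_opt (fst p))\<^sup>2 \<partial>P)"
      "(\<integral>z. (f (fst z) - mu (fst z)) * (g z - g_opt z) \<partial>PZ)
        = (\<integral>p. (f (fst (fst p)) - mu (fst (fst p))) * (g (fst p) - g_opt (fst p)) \<partial>P)"
      by (rule integral_distr; measurable)+
    then show ?thesis
      by (simp add: excess_form_def s_def)
  qed
  finally show ?thesis .
qed

lemma minimizer_ae_eq:
  assumes fs: "fs \<in> L2fun PX" and gs: "gs \<in> L2fun PZ"
    and le: "Loss P n m lam fs gs \<le> Loss P n m lam mu g_opt"
  shows "AE x in PX. fs x = mu x" and "AE z in PZ. gs z = g_opt z"
    and "Loss P n m lam fs gs = Loss P n m lam mu g_opt"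
proof -
  define A B C where "A = (\<integral>x. (fs x - mu x)\<^sup>2 \<partial>PX)" and "B = (\<integral>z. (gs z - g_opt z)\<^sup>2 \<partial>PZ)"
    and "C = (\<integral>z. (fs (fst z) - mu (fst z)) * (gs z - g_opt z) \<partial>PZ)"
  have [measurable]: "fs \<in> borel_measurable MX"
    using fs by (rule L2fun_PX_measurable)
  have "A = (\<integral>z. (fs (fst z) - mu (fst z))\<^sup>2 \<partial>PZ)"
    unfolding A_def by (rule integral_PX_eq_PZ) measurable
  then have CS: "C\<^sup>2 \<le> A * B"
    using Cauchy_Schwarz_integral[OF L2fun_diff[OF L2fun_PX_lift[OF fs] L2fun_PX_lift[OF mu_L2]]
        L2fun_diff[OF gs g_opt_L2]]
    by (simp add: B_def C_def)
  have "0 \<le> A" "0 \<le> B"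
    by (simp_all add: A_def B_def)
  moreover have "excess_form n m lam A B C \<le> 0"
    using le Loss_sub_Loss_g_opt[OF fs gs] by (simp add: A_def B_def C_def)
  ultimately have "A = 0" "B = 0"
    using excess_form_le_0_iff[OF n_pos m_pos lam_nonneg _ _ CS] by auto
  show "AE x in PX. fs x = mu x"
    using \<open>A = 0\<close> L2fun_diff[OF fs mu_L2]
    by (intro AE_eq_if_integral_sq_diff_eq_0) (simp_all add: A_def L2fun_integrable_sq)
  show "AE z in PZ. gs z = g_opt z"
    using \<open>B = 0\<close> L2fun_diff[OF gs g_opt_L2]
    by (intro AE_eq_if_integral_sq_diff_eq_0) (simp_all add: B_def L2fun_integrable_sq)
  from CS \<open>A = 0\<close> have "C = 0"
    by simp
  with \<open>A = 0\<close> \<open>B = 0\<close> show "Loss P n m lam fs gs = Loss P n m lam mu g_opt"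
    using Loss_sub_Loss_g_opt[OF fs gs] by (simp add: A_def B_def C_def excess_form_def)
qed

end

section \<open>Averaging over the training data\<close>

locale semisupervised_estimator = semisupervised_regression MX MW P n m lam mu eta
  for MX :: "'x measure" and MW :: "'w measure" and P n m lam mu eta +
  fixes D :: "'d measure" and fhat :: "'d \<Rightarrow> 'x \<Rightarrow> real" and ghat :: "'d \<Rightarrow> 'x \<times> 'w \<Rightarrow> real"
  assumes prob_space_D: "prob_space D"
    and fhat_measurable: "(\<lambda>(d, x). fhat d x) \<in> borel_measurable (D \<Otimes>\<^sub>M MX)"
    and ghat_measurable: "(\<lambda>(d, z). ghat d z) \<in> borel_measurable (D \<Otimes>\<^sub>M (MX \<Otimes>\<^sub>M MW))"
    and fhat_sq_integrable:
      "integrable (D \<Otimes>\<^sub>M distr P MX (\<lambda>p. fst (fst p))) (\<lambda>(d, x). (fhat d x)\<^sup>2)"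
    and ghat_sq_integrable:
      "integrable (D \<Otimes>\<^sub>M distr P (MX \<Otimes>\<^sub>M MW) fst) (\<lambda>(d, z). (ghat d z)\<^sup>2)"
    and fhat_L2: "\<And>d. d \<in> space D \<Longrightarrow> fhat d \<in> L2fun (distr P MX (\<lambda>p. fst (fst p)))"
    and ghat_L2: "\<And>d. d \<in> space D \<Longrightarrow> ghat d \<in> L2fun (distr P (MX \<Otimes>\<^sub>M MW) fst)"
begin

interpretation DX: pair_sigma_finite D PX
  by (intro pair_sigma_finite.intro prob_space_imp_sigma_finite prob_space_D prob_space_PX)

interpretation DZ: pair_sigma_finite D PZ
  by (intro pair_sigma_finite.intro prob_space_imp_sigma_finite prob_space_D prob_space_PZ)

lemma sets_pair_PX[measurable_cong]: "sets (D \<Otimes>\<^sub>M PX) = sets (D \<Otimes>\<^sub>M MX)"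
  by (rule sets_pair_measure_cong) simp_all

lemma sets_pair_PZ[measurable_cong]: "sets (D \<Otimes>\<^sub>M PZ) = sets (D \<Otimes>\<^sub>M (MX \<Otimes>\<^sub>M MW))"
  by (rule sets_pair_measure_cong) simp_all

lemma fhat_measurable'[measurable]: "(\<lambda>p. fhat (fst p) (snd p)) \<in> borel_measurable (D \<Otimes>\<^sub>M MX)"
  using fhat_measurable by (simp add: case_prod_unfold)

lemma ghat_measurable'[measurable]:
  "(\<lambda>p. ghat (fst p) (snd p)) \<in> borel_measurable (D \<Otimes>\<^sub>M (MX \<Otimes>\<^sub>M MW))"
  using ghat_measurable by (simp add: case_prod_unfold)

lemma pair_PX_eq_distr_pair_PZ:
  "D \<Otimes>\<^sub>M PX = distr (D \<Otimes>\<^sub>M PZ) (D \<Otimes>\<^sub>M MX) (\<lambda>p. (fst p, fst (snd p)))"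
proof -
  have "distr D D (\<lambda>d. d) \<Otimes>\<^sub>M distr PZ MX fst
      = distr (D \<Otimes>\<^sub>M PZ) (D \<Otimes>\<^sub>M MX) (\<lambda>(d, z). (d, fst z))"
    using PX_eq_distr_PZ prob_space_imp_sigma_finite[OF prob_space_PX]
    by (intro pair_measure_distr) (simp_all add: measurable_fst_PZ)
  then show ?thesis
    by (simp add: PX_eq_distr_PZ[symmetric] case_prod_unfold)
qed

lemma measurable_pair_fst_snd: "(\<lambda>p. (fst p, fst (snd p))) \<in> measurable (D \<Otimes>\<^sub>M PZ) (D \<Otimes>\<^sub>M MX)"
  by measurable

lemma fhat_lift_measurable[measurable]:
  "(\<lambda>p. fhat (fst p) (fst (snd p))) \<in> borel_measurable (D \<Otimes>\<^sub>M (MX \<Otimes>\<^sub>M MW))"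
proof -
  have "(\<lambda>p. (fst p, fst (snd p))) \<in> measurable (D \<Otimes>\<^sub>M (MX \<Otimes>\<^sub>M MW)) (D \<Otimes>\<^sub>M MX)"
    by measurable
  from measurable_compose[OF this fhat_measurable'] show ?thesis
    by simp
qed

lemma fhat_L2_pair: "(\<lambda>p. fhat (fst p) (snd p)) \<in> L2fun (D \<Otimes>\<^sub>M PX)"
  using fhat_sq_integrable by (intro L2funI) (simp_all add: case_prod_unfold)

lemma fhat_L2_pair_PZ: "(\<lambda>p. fhat (fst p) (fst (snd p))) \<in> L2fun (D \<Otimes>\<^sub>M PZ)"
  using L2fun_comp[OF measurable_pair_fst_snd fhat_L2_pair[unfolded pair_PX_eq_distr_pair_PZ]]
  by simp

lemma ghat_L2_pair: "(\<lambda>p. ghat (fst p) (snd p)) \<in> L2fun (D \<Otimes>\<^sub>M PZ)"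
  using ghat_sq_integrable by (intro L2funI) (simp_all add: case_prod_unfold)

lemma L2fun_pair_snd: "h \<in> L2fun Q \<Longrightarrow> prob_space Q \<Longrightarrow> (\<lambda>p. h (snd p)) \<in> L2fun (D \<Otimes>\<^sub>M Q)"
  by (intro L2fun_snd prob_space_D prob_space_imp_sigma_finite)

definition mse_f :: real where
  "mse_f = (\<integral>(d, x). (fhat d x - mu x)\<^sup>2 \<partial>(D \<Otimes>\<^sub>M PX))"

definition mse_g :: real where
  "mse_g = (\<integral>(d, z). (ghat d z - g_opt z)\<^sup>2 \<partial>(D \<Otimes>\<^sub>M PZ))"

definition cross_err :: real where
  "cross_err = (\<integral>(d, z). (fhat d (fst z) - mu (fst z)) * (ghat d z - g_opt z) \<partial>(D \<Otimes>\<^sub>M PZ))"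

lemma mse_f_eq_integral_pair_PZ:
  "mse_f = (\<integral>p. (fhat (fst p) (fst (snd p)) - mu (fst (snd p)))\<^sup>2 \<partial>(D \<Otimes>\<^sub>M PZ))"
proof -
  have "(\<lambda>p. (fhat (fst p) (snd p) - mu (snd p))\<^sup>2) \<in> borel_measurable (D \<Otimes>\<^sub>M MX)"
    by measurable
  then show ?thesis
    by (simp add: mse_f_def pair_PX_eq_distr_pair_PZ case_prod_unfold
        integral_distr[OF measurable_pair_fst_snd])
qed

lemma cross_err_sq_le: "cross_err\<^sup>2 \<le> mse_f * mse_g"
  using Cauchy_Schwarz_integral[OF
      L2fun_diff[OF fhat_L2_pair_PZ L2fun_pair_snd[OF L2fun_PX_lift[OF mu_L2] prob_space_PZ]]
      L2fun_diff[OF ghat_L2_pair L2fun_pair_snd[OF g_opt_L2 prob_space_PZ]]]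
  by (simp add: mse_f_eq_integral_pair_PZ mse_g_def cross_err_def case_prod_unfold)

lemma mse_f_nonneg: "0 \<le> mse_f"
  by (simp add: mse_f_def case_prod_unfold)

lemma mse_g_nonneg: "0 \<le> mse_g"
  by (simp add: mse_g_def case_prod_unfold)

lemma expected_Loss_excess:
  "(\<integral>d. Loss P n m lam (fhat d) (ghat d) - Loss P n m lam mu g_opt \<partial>D)
    = excess_form n m lam mse_f mse_g cross_err"
proof -
  define a where "a = (\<lambda>d. (\<integral>x. (fhat d x - mu x)\<^sup>2 \<partial>PX))"
  define b where "b = (\<lambda>d. (\<integral>z. (ghat d z - g_opt z)\<^sup>2 \<partial>PZ))"
  define c where "c = (\<lambda>d. (\<integral>z. (fhat d (fst z) - mu (fst z)) * (ghat d z - g_opt z) \<partial>PZ))"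
  have int_a: "integrable (D \<Otimes>\<^sub>M PX) (\<lambda>p. (fhat (fst p) (snd p) - mu (snd p))\<^sup>2)"
    using L2fun_diff[OF fhat_L2_pair L2fun_pair_snd[OF mu_L2 prob_space_PX]]
    by (rule L2fun_integrable_sq)
  have int_b: "integrable (D \<Otimes>\<^sub>M PZ) (\<lambda>p. (ghat (fst p) (snd p) - g_opt (snd p))\<^sup>2)"
    using L2fun_diff[OF ghat_L2_pair L2fun_pair_snd[OF g_opt_L2 prob_space_PZ]]
    by (rule L2fun_integrable_sq)
  have int_c: "integrable (D \<Otimes>\<^sub>M PZ)
      (\<lambda>p. (fhat (fst p) (fst (snd p)) - mu (fst (snd p))) * (ghat (fst p) (snd p) - g_opt (snd p)))"
    using L2fun_diff[OF fhat_L2_pair_PZ L2fun_pair_snd[OF L2fun_PX_lift[OF mu_L2] prob_space_PZ]]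
      L2fun_diff[OF ghat_L2_pair L2fun_pair_snd[OF g_opt_L2 prob_space_PZ]]
    by (rule integrable_mult_L2fun)
  have "integrable D a" "integrable D b" "integrable D c"
    using DX.integrable_fst'[OF int_a] DZ.integrable_fst'[OF int_b] DZ.integrable_fst'[OF int_c]
    by (simp_all add: a_def b_def c_def)
  have "(\<integral>d. a d \<partial>D) = mse_f" "(\<integral>d. b d \<partial>D) = mse_g" "(\<integral>d. c d \<partial>D) = cross_err"
    using DX.integral_fst'[OF int_a] DZ.integral_fst'[OF int_b] DZ.integral_fst'[OF int_c]
    by (simp_all add: a_def b_def c_def mse_f_def mse_g_def cross_err_def case_prod_unfold)
  have "(\<integral>d. Loss P n m lam (fhat d) (ghat d) - Loss P n m lam mu g_opt \<partial>D)
      = (\<integral>d. excess_form n m lam (a d) (b d) (c d) \<partial>D)"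
  proof (rule Bochner_Integration.integral_cong[OF refl])
    fix d
    assume "d \<in> space D"
    then show "Loss P n m lam (fhat d) (ghat d) - Loss P n m lam mu g_opt
        = excess_form n m lam (a d) (b d) (c d)"
      unfolding a_def b_def c_def by (intro Loss_sub_Loss_g_opt fhat_L2 ghat_L2)
  qed
  also have "\<dots> = excess_form n m lam (\<integral>d. a d \<partial>D) (\<integral>d. b d \<partial>D) (\<integral>d. c d \<partial>D)"
    using \<open>integrable D a\<close> \<open>integrable D b\<close> \<open>integrable D c\<close>
    by (simp add: excess_form_def)
  finally show ?thesis
    by (simp only: \<open>(\<integral>d. a d \<partial>D) = mse_f\<close> \<open>(\<integral>d. b d \<partial>D) = mse_g\<close>
        \<open>(\<integral>d. c d \<partial>D) = cross_err\<close>)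
qed

lemma rho_star_eq_correlation:
  assumes fs: "fs \<in> L2fun PX" and gs: "gs \<in> L2fun PZ"
    and fs_ae: "AE x in PX. fs x = mu x" and gs_ae: "AE z in PZ. gs z = g_opt z"
  shows "rho_star D PX PZ fs gs fhat ghat = correlation mse_f mse_g cross_err"
proof -
  have [measurable]: "fs \<in> borel_measurable MX" "gs \<in> borel_measurable (MX \<Otimes>\<^sub>M MW)"
    using fs gs by (simp_all add: L2fun_PX_measurable L2fun_PZ_measurable)
  have sf: "sigma_finite_measure PX" "sigma_finite_measure PZ"
    by (simp_all add: prob_space_imp_sigma_finite prob_space_PX prob_space_PZ)
  have ae_X: "AE p in D \<Otimes>\<^sub>M PX. fs (snd p) = mu (snd p)"
    using AE_pair_snd[OF prob_space_D sf(1) fs_ae] .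
  have "AE z in PZ. fs (fst z) = mu (fst z)"
    using fs_ae unfolding PX_eq_distr_PZ by (rule AE_distrD[OF measurable_fst_PZ])
  with gs_ae have "AE z in PZ. fs (fst z) = mu (fst z) \<and> gs z = g_opt z"
    by eventually_elim simp
  then have ae_Z: "AE p in D \<Otimes>\<^sub>M PZ. fs (fst (snd p)) = mu (fst (snd p)) \<and> gs (snd p) = g_opt (snd p)"
    using AE_pair_snd[OF prob_space_D sf(2)] by blast
  have "AE p in D \<Otimes>\<^sub>M PX. (fs (snd p) - fhat (fst p) (snd p))\<^sup>2 = (fhat (fst p) (snd p) - mu (snd p))\<^sup>2"
    using ae_X by eventually_elim (simp add: power2_commute)
  then have "(\<integral>(d, x). (fs x - fhat d x)\<^sup>2 \<partial>(D \<Otimes>\<^sub>M PX)) = mse_f"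
    unfolding mse_f_def case_prod_unfold by (intro integral_cong_AE) measurable
  moreover have "AE p in D \<Otimes>\<^sub>M PZ. (gs (snd p) - ghat (fst p) (snd p))\<^sup>2 = (ghat (fst p) (snd p) - g_opt (snd p))\<^sup>2"
    using ae_Z by eventually_elim (simp add: power2_commute)
  then have "(\<integral>(d, z). (gs z - ghat d z)\<^sup>2 \<partial>(D \<Otimes>\<^sub>M PZ)) = mse_g"
    unfolding mse_g_def case_prod_unfold by (intro integral_cong_AE) measurable
  moreover have "AE p in D \<Otimes>\<^sub>M PZ.
      (fs (fst (snd p)) - fhat (fst p) (fst (snd p))) * (gs (snd p) - ghat (fst p) (snd p))
      = (fhat (fst p) (fst (snd p)) - mu (fst (snd p))) * (ghat (fst p) (snd p) - g_opt (snd p))"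
    using ae_Z by eventually_elim (simp add: algebra_simps)
  then have "(\<integral>(d, z). (fs (fst z) - fhat d (fst z)) * (gs z - ghat d z) \<partial>(D \<Otimes>\<^sub>M PZ)) = cross_err"
    unfolding cross_err_def case_prod_unfold by (intro integral_cong_AE) measurable
  ultimately show ?thesis
    by (simp add: rho_star_def correlation_def Let_def)
qed

theorem risk_bound:
  assumes fs: "fs \<in> L2fun PX" and gs: "gs \<in> L2fun PZ"
    and le: "Loss P n m lam fs gs \<le> Loss P n m lam mu g_opt"
  shows "real n / real (n + m) \<le> gamma_factor n m lam (rho_star D PX PZ fs gs fhat ghat)"
    and "(\<integral>(d, x). (fhat d x - mu x)\<^sup>2 \<partial>(D \<Otimes>\<^sub>M PX))
      \<le> (\<integral>d. Loss P n m lam (fhat d) (ghat d) - Loss P n m lam fs gs \<partial>D)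
        / gamma_factor n m lam (rho_star D PX PZ fs gs fhat ghat)"
proof -
  note star = minimizer_ae_eq[OF fs gs le]
  note bound = excess_form_bound[OF n_pos m_pos lam_nonneg mse_f_nonneg mse_g_nonneg cross_err_sq_le]
  have rho: "rho_star D PX PZ fs gs fhat ghat = correlation mse_f mse_g cross_err"
    by (rule rho_star_eq_correlation[OF fs gs star(1,2)])
  show "real n / real (n + m) \<le> gamma_factor n m lam (rho_star D PX PZ fs gs fhat ghat)"
    unfolding rho by (rule bound(1))
  show "(\<integral>(d, x). (fhat d x - mu x)\<^sup>2 \<partial>(D \<Otimes>\<^sub>M PX))
      \<le> (\<integral>d. Loss P n m lam (fhat d) (ghat d) - Loss P n m lam fs gs \<partial>D)
        / gamma_factor n m lam (rho_star D PX PZ fs gs fhat ghat)"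
    unfolding rho star(3) expected_Loss_excess mse_f_def[symmetric] by (rule bound(2))
qed

end

theorem corollary2p3:
  fixes MX :: "'x measure" and MW :: "'w measure"
    and P :: "(('x \<times> 'w) \<times> real) measure"
    and n m :: nat and lam :: real
    and FF :: "('x \<Rightarrow> real) set" and GG :: "('x \<times> 'w \<Rightarrow> real) set"
    and fstar :: "'x \<Rightarrow> real" and gstar :: "'x \<times> 'w \<Rightarrow> real"
    and mu :: "'x \<Rightarrow> real" and eta :: "'x \<times> 'w \<Rightarrow> real"
    and fhat :: "(nat \<Rightarrow> ('x \<times> 'w) \<times> real) \<times> (nat \<Rightarrow> 'x \<times> 'w) \<Rightarrow> 'x \<Rightarrow> real"
    and ghat :: "(nat \<Rightarrow> ('x \<times> 'w) \<times> real) \<times> (nat \<Rightarrow> 'x \<times> 'w) \<Rightarrow> 'x \<times> 'w \<Rightarrow> real"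
  defines "PX \<equiv> distr P MX (\<lambda>p. fst (fst p))"
    and "PZ \<equiv> distr P (MX \<Otimes>\<^sub>M MW) fst"
    and "DM \<equiv> data_measure P (MX \<Otimes>\<^sub>M MW) n m"
  assumes P_prob: "prob_space P"
    and P_sets: "sets P = sets ((MX \<Otimes>\<^sub>M MW) \<Otimes>\<^sub>M borel)"
    and Y_sq: "integrable P (\<lambda>p. (snd p)\<^sup>2)"
    and n_pos: "n \<ge> 1" and m_pos: "m \<ge> 1" and lam_nonneg: "lam \<ge> 0"
    and F_sub: "FF \<subseteq> L2fun PX" and F_ne: "FF \<noteq> {}"
    and F_closed: "L2_closed PX FF" and F_convex: "fun_convex FF"
    and G_sub: "GG \<subseteq> L2fun PZ" and G_ne: "GG \<noteq> {}"
    and G_closed: "L2_closed PZ GG" and G_convex: "fun_convex GG"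
    and fstar_in: "fstar \<in> FF" and gstar_in: "gstar \<in> GG"
    and star_min: "\<forall>f\<in>FF. \<forall>g\<in>GG. Loss P n m lam fstar gstar \<le> Loss P n m lam f g"
    and mu_meas: "mu \<in> borel_measurable MX"
    and mu_ce: "AE p in P. mu (fst (fst p)) =
                  real_cond_exp P (vimage_algebra (space P) (\<lambda>p. fst (fst p)) MX) snd p"
    and eta_meas: "eta \<in> borel_measurable (MX \<Otimes>\<^sub>M MW)"
    and eta_ce: "AE p in P. eta (fst p) =
                  real_cond_exp P (vimage_algebra (space P) fst (MX \<Otimes>\<^sub>M MW)) snd p"
    and mu_F: "mu \<in> FF" and mu_G: "(\<lambda>z. mu (fst z)) \<in> GG" and eta_G: "eta \<in> GG"
    and fhat_meas: "(\<lambda>(d, x). fhat d x) \<in> borel_measurable (DM \<Otimes>\<^sub>M MX)"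
    and ghat_meas: "(\<lambda>(d, z). ghat d z) \<in> borel_measurable (DM \<Otimes>\<^sub>M (MX \<Otimes>\<^sub>M MW))"
    and fhat_sq: "integrable (DM \<Otimes>\<^sub>M PX) (\<lambda>(d, x). (fhat d x)\<^sup>2)"
    and ghat_sq: "integrable (DM \<Otimes>\<^sub>M PZ) (\<lambda>(d, z). (ghat d z)\<^sup>2)"
    and fhat_in: "\<forall>d\<in>space DM. fhat d \<in> FF"
    and ghat_in: "\<forall>d\<in>space DM. ghat d \<in> GG"
  shows "(let rho = rho_star DM PX PZ fstar gstar fhat ghat;
              gamma = 1 - (real m)\<^sup>2 / (real (n + m) * (real m + real n * lam)) * rho\<^sup>2
          in gamma \<ge> real n / real (n + m) \<and>
             (\<integral>(d, x). (fhat d x - mu x)\<^sup>2 \<partial>(DM \<Otimes>\<^sub>M PX))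
               \<le> (\<integral>d. Loss P n m lam (fhat d) (ghat d) - Loss P n m lam fstar gstar \<partial>DM) / gamma)"
proof -
  \<comment> \<open>Nonemptiness and closedness of \<open>FF\<close> and \<open>GG\<close> only guarantee that a minimiser exists,
     which is given here; measurability of \<open>mu\<close> and \<open>eta\<close> follows from \<open>mu \<in> FF\<close>, \<open>eta \<in> GG\<close>.\<close>
  interpret R: semisupervised_regression MX MW P n m lam mu eta
    using n_pos m_pos lam_nonneg mu_F eta_G F_sub G_sub unfolding PX_def PZ_def
    by (intro semisupervised_regression.intro P_prob P_sets Y_sq mu_ce eta_ce) auto
  have "prob_space DM"
    unfolding DM_def by (rule R.prob_space_data_measure)
  interpret E: semisupervised_estimator MX MW P n m lam mu eta DM fhat ghat
    using \<open>prob_space DM\<close> fhat_sq ghat_sq fhat_in ghat_in F_sub G_sub unfolding PX_def PZ_def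
    by (intro semisupervised_estimator.intro R.semisupervised_regression_axioms
        semisupervised_estimator_axioms.intro fhat_meas ghat_meas) auto
  have "R.g_opt \<in> GG"
    using G_convex mu_G eta_G by (rule R.g_opt_mem_convex)
  have "fstar \<in> L2fun R.PX" "gstar \<in> L2fun R.PZ"
    using fstar_in gstar_in F_sub G_sub unfolding PX_def PZ_def by auto
  note bound = E.risk_bound[OF this star_min[rule_format, OF mu_F \<open>R.g_opt \<in> GG\<close>]]
  show ?thesis
    using bound unfolding Let_def PX_def PZ_def gamma_factor_def by blast
qed

end
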